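(* Let $P,Q\in\mathbb P_d$ and $R=\big((1-t)P+tQ\big)^{-1}$ for some $t\in[0,1]$. Then $\operatorname{F}_R(P,Q)=\operatorname{F}^{\mathrm M}(P,Q)$.
   Context: $\mathbb P_d$ is the set of $d\times d$ complex positive definite matrices; $A\#B:=A^{1/2}(A^{-1/2}BA^{-1/2})^{1/2}A^{1/2}$. The generalized fidelity is $\operatorname{F}_R(P,Q):=\operatorname{Tr}\big[\sqrt{R^{1/2}PR^{1/2}}\,R^{-1}\sqrt{R^{1/2}QR^{1/2}}\big]$, and the Matsumoto fidelity is $\operatorname{F}^{\mathrm M}(P,Q):=\operatorname{Tr}[P\#Q]$. *)

theory Defs
  imports "HOL-Analysis.Analysis"
begin

text \<open>Complex d x d matrices are modelled as complex^'n^'n for a finite index type 'n (d = CARD('n)).\<close>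

definition cadjoint :: "complex^'n^'m \<Rightarrow> complex^'m^'n" where
  "cadjoint A = (\<chi> i j. cnj (A $ j $ i))"

definition qform :: "complex^'n^'n \<Rightarrow> complex^'n \<Rightarrow> complex" where
  "qform A x = (\<Sum>i\<in>UNIV. cnj (x $ i) * (A *v x) $ i)"

definition pos_def :: "complex^'n^'n \<Rightarrow> bool" where
  "pos_def A \<longleftrightarrow> cadjoint A = A \<and>
     (\<forall>x. x \<noteq> 0 \<longrightarrow> Im (qform A x) = 0 \<and> Re (qform A x) > 0)"

definition pos_semidef :: "complex^'n^'n \<Rightarrow> bool" where
  "pos_semidef A \<longleftrightarrow> cadjoint A = A \<and>
     (\<forall>x. Im (qform A x) = 0 \<and> Re (qform A x) \<ge> 0)"

definition msqrt :: "complex^'n^'n \<Rightarrow> complex^'n^'n" where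
  "msqrt A = (THE B. pos_semidef B \<and> B ** B = A)"

definition mgeo :: "complex^'n^'n \<Rightarrow> complex^'n^'n \<Rightarrow> complex^'n^'n" where
  "mgeo A B = msqrt A ** msqrt (matrix_inv (msqrt A) ** B ** matrix_inv (msqrt A)) ** msqrt A"

definition gen_fidelity :: "complex^'n^'n \<Rightarrow> complex^'n^'n \<Rightarrow> complex^'n^'n \<Rightarrow> complex" where
  "gen_fidelity R P Q = trace (msqrt (msqrt R ** P ** msqrt R) ** matrix_inv R **
                               msqrt (msqrt R ** Q ** msqrt R))"

definition matsumoto_fidelity :: "complex^'n^'n \<Rightarrow> complex^'n^'n \<Rightarrow> complex" where
  "matsumoto_fidelity P Q = trace (mgeo P Q)"

end

theory Submission
  imports Defs
begin

text \<open>
  Put \<open>S = (1 - t) P + t Q = R\<^sup>-\<^sup>1\<close>, \<open>X = R\<^sup>1\<^sup>/\<^sup>2 P R\<^sup>1\<^sup>/\<^sup>2\<close> and \<open>Y = R\<^sup>1\<^sup>/\<^sup>2 Q R\<^sup>1\<^sup>/\<^sup>2\<close>.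
  Then \<open>(1 - t) X + t Y = R\<^sup>1\<^sup>/\<^sup>2 S R\<^sup>1\<^sup>/\<^sup>2 = 1\<close>, so \<open>X\<close> and \<open>Y\<close> commute and are diagonalised
  by one unitary. By cyclicity of the trace, \<open>F\<^sub>R(P,Q) = Tr[X\<^sup>1\<^sup>/\<^sup>2 S Y\<^sup>1\<^sup>/\<^sup>2] = Tr[X\<^sup>1\<^sup>/\<^sup>2 Y\<^sup>1\<^sup>/\<^sup>2 S]\<close>.
  On the other side, \<open>A # B\<close> is the unique positive semidefinite solution \<open>G\<close> of the
  Riccati equation \<open>G A\<^sup>-\<^sup>1 G = B\<close>. Hence the geometric mean is invariant under congruence
  and equals \<open>X\<^sup>1\<^sup>/\<^sup>2 Y\<^sup>1\<^sup>/\<^sup>2\<close> for commuting \<open>X, Y\<close>, so that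
  \<open>P # Q = R\<^sup>-\<^sup>1\<^sup>/\<^sup>2 (X # Y) R\<^sup>-\<^sup>1\<^sup>/\<^sup>2\<close> has trace \<open>Tr[X\<^sup>1\<^sup>/\<^sup>2 Y\<^sup>1\<^sup>/\<^sup>2 S]\<close> as well.
\<close>

section \<open>Inner product and adjoint\<close>

definition cinner :: "complex^'n \<Rightarrow> complex^'n \<Rightarrow> complex" where
  "cinner x y = (\<Sum>i\<in>UNIV. cnj (x$i) * y$i)"

lemma qform_cinner: "qform A x = cinner x (A *v x)"
  by (simp add: qform_def cinner_def)

lemma scaleR_vec_nth: "((c::real) *\<^sub>R (x::complex^'n)) $ i = complex_of_real c * x$i"
  by (simp only: vector_scaleR_component) (simp add: scaleR_conv_of_real)

lemma scaleR_mat_nth: "((c::real) *\<^sub>R (A::complex^'n^'m)) $ i $ j = complex_of_real c * A$i$j"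
  by (simp only: vector_scaleR_component) (simp add: scaleR_conv_of_real)

lemma scaleR_as_smult: "(c::real) *\<^sub>R (x::complex^'n) = complex_of_real c *s x"
  by (simp add: vec_eq_iff scaleR_vec_nth del: vector_scaleR_component)

lemma cnj_mult_self: "cnj z * z = (complex_of_real (cmod z))^2"
  by (subst mult.commute) (simp add: complex_norm_square[symmetric])

lemma cadjoint_nth [simp]: "cadjoint A $ i $ j = cnj (A $ j $ i)"
  by (simp add: cadjoint_def)

lemma cadjoint_cadjoint [simp]: "cadjoint (cadjoint A) = A"
  by (simp add: vec_eq_iff)

lemma cadjoint_mult: "cadjoint (A ** B) = cadjoint B ** cadjoint (A::complex^'n^'m)"
  by (simp add: vec_eq_iff matrix_matrix_mult_def mult.commute)

lemma cadjoint_mat [simp]: "cadjoint (mat (complex_of_real c) :: complex^'n^'n) = mat (complex_of_real c)"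
  by (simp add: vec_eq_iff mat_def)

lemma cadjoint_mat_1 [simp]: "cadjoint (mat 1 :: complex^'n^'n) = mat 1"
  using cadjoint_mat[of 1] by simp

lemma cadjoint_add: "cadjoint (A + B) = cadjoint A + cadjoint (B::complex^'n^'m)"
  by (simp add: vec_eq_iff)

lemma cadjoint_diff: "cadjoint (A - B) = cadjoint A - cadjoint (B::complex^'n^'m)"
  by (simp add: vec_eq_iff)

lemma cadjoint_scaleR: "cadjoint (c *\<^sub>R A) = c *\<^sub>R cadjoint (A::complex^'n^'m)"
  by (simp add: vec_eq_iff scaleR_mat_nth del: vector_scaleR_component)

lemma matrix_add_rdistrib: "((B::'a::semiring_1^'n^'m) + C) ** A = B ** A + C ** A"
  by (simp add: vec_eq_iff matrix_matrix_mult_def distrib_right sum.distrib)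

lemma cinner_cadjoint: "cinner x (A *v y) = cinner (cadjoint A *v x) y"
proof -
  have "cinner x (A *v y) = (\<Sum>i\<in>UNIV. \<Sum>j\<in>UNIV. cnj (x$i) * (A$i$j * y$j))"
    by (simp add: cinner_def matrix_vector_mult_def sum_distrib_left)
  also have "\<dots> = (\<Sum>j\<in>UNIV. \<Sum>i\<in>UNIV. cnj (x$i) * (A$i$j * y$j))"
    by (rule sum.swap)
  also have "\<dots> = cinner (cadjoint A *v x) y"
    unfolding cinner_def matrix_vector_mult_def cadjoint_def
    by (simp add: sum_distrib_left mult_ac)
  finally show ?thesis .
qed

lemma cinner_hermitian: "cadjoint A = A \<Longrightarrow> cinner x (A *v y) = cinner (A *v x) y"
  by (metis cinner_cadjoint)

lemma cinner_commute: "cinner y x = cnj (cinner x y)"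
  by (simp add: cinner_def mult.commute)

lemma cinner_add_right: "cinner x (y + z) = cinner x y + cinner x z"
  by (simp add: cinner_def distrib_left sum.distrib)

lemma cinner_add_left: "cinner (x + y) z = cinner x z + cinner y z"
  by (simp add: cinner_def distrib_right sum.distrib)

lemma cinner_diff_right: "cinner x (y - z) = cinner x y - cinner x z"
  by (simp add: cinner_def right_diff_distrib sum_subtractf)

lemma cinner_scale_right: "cinner x (c *s y) = c * cinner x y"
  by (simp add: cinner_def sum_distrib_left mult_ac)

lemma cinner_scale_left: "cinner (c *s x) y = cnj c * cinner x y"
  by (simp add: cinner_def sum_distrib_left mult_ac)

lemma cinner_zero_right [simp]: "cinner x 0 = 0"
  by (simp add: cinner_def)

lemma cinner_self: "cinner x x = complex_of_real ((norm x)^2)"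
proof -
  have "cinner x x = (\<Sum>i\<in>UNIV. complex_of_real ((norm (x$i))^2))"
    unfolding cinner_def by (intro sum.cong refl) (simp add: cnj_mult_self)
  also have "\<dots> = complex_of_real (\<Sum>i\<in>UNIV. (norm (x$i))^2)" by simp
  also have "(\<Sum>i\<in>UNIV. (norm (x$i))^2) = (norm x)^2"
    by (simp add: norm_vec_def L2_set_def sum_nonneg)
  finally show ?thesis .
qed

lemma cinner_self_eq_0 [simp]: "cinner x x = 0 \<longleftrightarrow> x = 0"
  by (simp add: cinner_self)

lemma qform_add: "qform (A + B) x = qform A x + qform B x"
  unfolding qform_cinner by (simp add: matrix_vector_mult_add_rdistrib cinner_add_right)

lemma qform_scaleR_left: "qform (c *\<^sub>R A) x = complex_of_real c * qform A x"
  unfolding qform_def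
  by (simp add: matrix_vector_mult_def sum_distrib_left mult_ac scaleR_mat_nth del: vector_scaleR_component)

lemma qform_scaleR_right: "qform A (c *\<^sub>R x) = complex_of_real (c^2) * qform A x"
  unfolding qform_cinner scaleR_as_smult
  by (simp add: vector_scalar_commute cinner_scale_left cinner_scale_right power2_eq_square)

lemma qform_congruence: "qform (cadjoint C ** M ** C) x = qform M (C *v x)"
  unfolding qform_cinner
  by (simp add: matrix_vector_mul_assoc[symmetric] cinner_cadjoint[of x "cadjoint C"])

section \<open>Spectral theorem for Hermitian matrices\<close>

lemma hermitian_qform_add_scale:
  assumes herm: "cadjoint B = B"
  shows "Re (qform B (v + s *s w)) = Re (qform B v) + 2 * Re (cnj s * cinner w (B *v v))
           + (cmod s)^2 * Re (cinner w (B *v w))"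
proof -
  define z where "z = cinner w (B *v v)"
  have "cinner v (B *v w) = cnj z"
    unfolding z_def using cinner_hermitian[OF herm, of v w] cinner_commute[of "B *v v" w] by simp
  hence "qform B (v + s *s w) = qform B v + s * cnj z + cnj s * z + cnj s * s * cinner w (B *v w)"
    unfolding qform_cinner z_def
    by (simp add: vector_scalar_commute cinner_add_left cinner_add_right cinner_scale_left
        cinner_scale_right algebra_simps)
  moreover have "Re (s * cnj z) = Re (cnj s * z)"
    by (metis complex_cnj_cnj complex_cnj_mult cnj.simps(1))
  moreover have "Re (cnj s * s) = (cmod s)^2"
    by (simp add: cnj_mult_self)
  ultimately show ?thesis unfolding z_def by simp
qed

lemma hermitian_qform_min_orthogonal:
  assumes herm: "cadjoint B = B"
    and nonneg: "\<And>s::complex. Re (qform B (v + s *s w)) \<ge> 0"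
    and zero: "Re (qform B v) = 0"
  shows "cinner w (B *v v) = 0"
proof -
  define z where "z = cinner w (B *v v)"
  define c where "c = Re (cinner w (B *v w))"
  have expand: "Re (qform B (v + s *s w)) = 2 * Re (cnj s * z) + (cmod s)^2 * c" for s
    using hermitian_qform_add_scale[OF herm, of v s w] zero unfolding z_def c_def by simp
  \<comment> \<open>Test with the step \<open>s = -e z\<close>, where \<open>e > 0\<close> is so small that \<open>e c < 1\<close>.\<close>
  define e where "e = 1 / (\<bar>c\<bar> + 1)"
  have e_pos: "e > 0" unfolding e_def by simp
  have ec: "e * c < 1"
  proof -
    have "e * c \<le> e * \<bar>c\<bar>" using e_pos by (simp add: mult_left_mono)
    also have "\<dots> < 1" unfolding e_def by (simp add: field_simps)
    finally show ?thesis .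
  qed
  define s where "s = - (complex_of_real e * z)"
  have "Re (cnj s * z) = - e * ((Re z)^2 + (Im z)^2)"
    unfolding s_def by (simp add: power2_eq_square algebra_simps)
  hence "Re (cnj s * z) = - e * (cmod z)^2" by (simp add: cmod_power2)
  moreover have "(cmod s)^2 = e^2 * (cmod z)^2"
    unfolding s_def using e_pos by (simp add: norm_mult power_mult_distrib)
  ultimately have "0 \<le> e * ((cmod z)^2 * (e * c - 2))"
    using nonneg[of s] expand[of s] by (simp add: algebra_simps power2_eq_square)
  hence "0 \<le> (cmod z)^2 * (e * c - 2)" using e_pos by (simp add: zero_le_mult_iff)
  hence "(cmod z)^2 \<le> 0" using ec by (simp add: mult_le_0_iff zero_le_mult_iff)
  thus ?thesis unfolding z_def[symmetric] by simp
qed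

lemma pos_semidef_qform_eq_0_imp_kernel:
  assumes "pos_semidef B" and "Re (qform B v) = 0"
  shows "B *v v = 0"
proof -
  have "cinner (B *v v) (B *v v) = 0"
    using assms by (intro hermitian_qform_min_orthogonal) (auto simp: pos_semidef_def)
  thus ?thesis by simp
qed

lemma orthogonal_complement_nonzero:
  fixes u :: "'n \<Rightarrow> complex^'n"
  assumes "j0 \<notin> J"
  shows "\<exists>x. x \<noteq> 0 \<and> (\<forall>i\<in>J. cinner (u i) x = 0)"
proof -
  define f where "f x = (\<chi> i. if i \<in> J then cinner (u i) x else 0)" for x :: "complex^'n"
  have lin: "linear f"
  proof (rule linearI)
    show "f (x + y) = f x + f y" for x y by (simp add: f_def vec_eq_iff cinner_add_right)
    show "f (c *\<^sub>R x) = c *\<^sub>R f x" for c x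
      by (simp add: f_def vec_eq_iff scaleR_as_smult cinner_scale_right scaleR_vec_nth
          del: vector_scaleR_component)
  qed
  \<comment> \<open>No \<open>x\<close> satisfies \<open>f x $ j0 = 1\<close>, so the square linear map \<open>f\<close> is not injective.\<close>
  have "\<not> surj f"
  proof
    assume "surj f"
    then obtain x where "f x = axis j0 1" by (metis surjD)
    hence "f x $ j0 = 1" by simp
    thus False using assms by (simp add: f_def)
  qed
  hence "\<not> inj f" using linear_injective_imp_surjective[OF lin] by blast
  then obtain x y where "x \<noteq> y" "f x = f y" unfolding inj_def by blast
  hence "x - y \<noteq> 0" and f0: "f (x - y) = 0" using lin by (auto simp: linear_diff)
  moreover have "cinner (u i) (x - y) = 0" if "i \<in> J" for i
    using arg_cong[OF f0, of "\<lambda>z. z $ i"] that by (simp add: f_def)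
  ultimately show ?thesis by blast
qed

lemma rayleigh_quotient_attains_max:
  fixes A :: "complex^'n^'n"
  assumes "closed W" and W_scale: "\<And>c w. w \<in> W \<Longrightarrow> c *s w \<in> W"
    and "x0 \<in> W" "x0 \<noteq> 0"
  shows "\<exists>v l. v \<in> W \<and> norm v = 1 \<and> Re (qform A v) = l \<and>
           (\<forall>x\<in>W. Re (qform A x) \<le> l * (norm x)^2)"
proof -
  have W_scaleR: "c *\<^sub>R w \<in> W" if "w \<in> W" for c w
    using W_scale[OF that] by (simp add: scaleR_as_smult)
  define K where "K = W \<inter> sphere 0 1"
  have "compact K" unfolding K_def using \<open>closed W\<close> by (intro closed_Int_compact) auto
  moreover have "(1 / norm x0) *\<^sub>R x0 \<in> K"
    using \<open>x0 \<in> W\<close> \<open>x0 \<noteq> 0\<close> W_scaleR unfolding K_def by auto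
  moreover have "continuous_on K (\<lambda>x. Re (qform A x))"
    unfolding qform_def matrix_vector_mult_def by (intro continuous_intros)
  ultimately obtain v where "v \<in> K" and v_max: "\<And>y. y \<in> K \<Longrightarrow> Re (qform A y) \<le> Re (qform A v)"
    using continuous_attains_sup[of K "\<lambda>x. Re (qform A x)"] by blast
  have "Re (qform A x) \<le> Re (qform A v) * (norm x)^2" if "x \<in> W" for x
  proof (cases "x = 0")
    case True thus ?thesis by (simp add: qform_def)
  next
    case False
    have "(1 / norm x) *\<^sub>R x \<in> K" using that False W_scaleR unfolding K_def by auto
    hence "Re (qform A ((1 / norm x) *\<^sub>R x)) \<le> Re (qform A v)" by (rule v_max)
    hence "(1 / norm x)^2 * Re (qform A x) \<le> Re (qform A v)" unfolding qform_scaleR_right by simp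
    thus ?thesis using False by (simp add: field_simps)
  qed
  thus ?thesis using \<open>v \<in> K\<close> unfolding K_def by auto
qed

lemma hermitian_eigvec_in_invariant_subspace:
  fixes A :: "complex^'n^'n"
  assumes herm: "cadjoint A = A" and "closed W"
    and W_scale: "\<And>c w. w \<in> W \<Longrightarrow> c *s w \<in> W"
    and W_add: "\<And>w w'. w \<in> W \<Longrightarrow> w' \<in> W \<Longrightarrow> w + w' \<in> W"
    and W_invariant: "\<And>w. w \<in> W \<Longrightarrow> A *v w \<in> W"
    and "x0 \<in> W" "x0 \<noteq> 0"
  shows "\<exists>v l. v \<in> W \<and> cinner v v = 1 \<and> A *v v = complex_of_real l *s v"
proof -
  obtain v l where "v \<in> W" "norm v = 1" "Re (qform A v) = l"
    and bound: "\<And>x. x \<in> W \<Longrightarrow> Re (qform A x) \<le> l * (norm x)^2"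
    using rayleigh_quotient_attains_max[OF \<open>closed W\<close> W_scale \<open>x0 \<in> W\<close> \<open>x0 \<noteq> 0\<close>, of A] by blast
  \<comment> \<open>\<open>l - A\<close> is positive semidefinite on \<open>W\<close> and vanishes at \<open>v\<close>, so \<open>(l - A) v \<in> W\<close> is orthogonal to \<open>W\<close>.\<close>
  define B where "B = mat (complex_of_real l) - A"
  have mat_mult_vec: "mat c *v x = c *s x" for c and x :: "complex^'n"
    by (simp add: vec_eq_iff matrix_vector_mult_def mat_def if_distrib if_distribR cong: if_cong)
  have B_herm: "cadjoint B = B" unfolding B_def by (simp add: cadjoint_diff herm)
  have qform_B: "Re (qform B x) = l * (norm x)^2 - Re (qform A x)" for x
    unfolding B_def qform_cinner
    by (simp add: matrix_vector_mult_diff_rdistrib mat_mult_vec cinner_diff_right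
        cinner_scale_right cinner_self)
  have Bv: "B *v v = complex_of_real l *s v - A *v v"
    unfolding B_def by (simp add: matrix_vector_mult_diff_rdistrib mat_mult_vec)
  have "B *v v \<in> W"
    unfolding Bv using W_add[OF W_scale W_scale[of _ "-1"]] \<open>v \<in> W\<close> W_invariant
    by (simp add: vector_sneg_minus1[symmetric])
  moreover have "cinner w (B *v v) = 0" if "w \<in> W" for w
  proof (rule hermitian_qform_min_orthogonal[OF B_herm])
    show "0 \<le> Re (qform B (v + s *s w))" for s
      using bound[of "v + s *s w"] qform_B[of "v + s *s w"] W_add[OF \<open>v \<in> W\<close> W_scale[OF that]] by simp
    show "Re (qform B v) = 0" using qform_B[of v] \<open>norm v = 1\<close> \<open>Re (qform A v) = l\<close> by simp
  qed
  ultimately have "B *v v = 0" using cinner_self_eq_0 by blast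
  hence "A *v v = complex_of_real l *s v" unfolding Bv by simp
  thus ?thesis using \<open>v \<in> W\<close> \<open>norm v = 1\<close> by (intro exI[of _ v] exI[of _ l]) (simp add: cinner_self)
qed

lemma hermitian_orthonormal_eigvecs:
  fixes A :: "complex^'n^'n" and J :: "'n set"
  assumes herm: "cadjoint A = A" and "finite J"
  shows "\<exists>u d. (\<forall>i\<in>J. \<forall>j\<in>J. cinner (u i) (u j) = (if i = j then 1 else 0)) \<and>
               (\<forall>i\<in>J. A *v u i = complex_of_real (d i) *s u i)"
  using \<open>finite J\<close>
proof (induction J rule: finite_induct)
  case empty thus ?case by auto
next
  case (insert j0 J)
  then obtain u d where orth: "\<forall>i\<in>J. \<forall>j\<in>J. cinner (u i) (u j) = (if i = j then 1 else 0)"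
    and eig: "\<forall>i\<in>J. A *v u i = complex_of_real (d i) *s u i" by blast
  define W where "W = (\<Inter>i\<in>J. {x. cinner (u i) x = 0})"
  have W_closed: "closed W"
    unfolding W_def cinner_def by (intro closed_INT ballI closed_Collect_eq continuous_intros)
  have W_invariant: "A *v w \<in> W" if "w \<in> W" for w
    using that eig by (simp add: W_def cinner_hermitian[OF herm] cinner_scale_left)
  have W_scale: "c *s w \<in> W" if "w \<in> W" for c w
    using that by (simp add: W_def cinner_scale_right)
  have W_add: "w + w' \<in> W" if "w \<in> W" "w' \<in> W" for w w'
    using that by (simp add: W_def cinner_add_right)
  obtain x0 where x0: "x0 \<in> W" "x0 \<noteq> 0"
    using orthogonal_complement_nonzero[OF insert(2), of u] unfolding W_def by blast
  obtain v l where v: "v \<in> W" "cinner v v = 1" "A *v v = complex_of_real l *s v"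
    using hermitian_eigvec_in_invariant_subspace[OF herm W_closed W_scale W_add W_invariant x0]
    by blast
  have "cinner v (u i) = 0" "cinner (u i) v = 0" if "i \<in> J" for i
    using v(1) that cinner_commute[of v "u i"] by (auto simp: W_def)
  thus ?case using orth eig v insert(2)
    by (intro exI[of _ "u(j0 := v)"] exI[of _ "d(j0 := l)"]) auto
qed

definition diag_mat :: "('n \<Rightarrow> real) \<Rightarrow> complex^'n^'n" where
  "diag_mat d = (\<chi> i j. if i = j then complex_of_real (d i) else 0)"

definition unitary :: "complex^'n^'n \<Rightarrow> bool" where
  "unitary U \<longleftrightarrow> cadjoint U ** U = mat 1 \<and> U ** cadjoint U = mat 1"

definition udiag :: "complex^'n^'n \<Rightarrow> ('n \<Rightarrow> real) \<Rightarrow> complex^'n^'n" where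
  "udiag U d = U ** diag_mat d ** cadjoint U"

theorem hermitian_spectral:
  fixes A :: "complex^'n^'n"
  assumes herm: "cadjoint A = A"
  shows "\<exists>U d. unitary U \<and> A = udiag U d"
proof -
  obtain u :: "'n \<Rightarrow> complex^'n" and d :: "'n \<Rightarrow> real"
    where orth: "\<And>i j. cinner (u i) (u j) = (if i = j then 1 else 0)"
      and eig: "\<And>i. A *v u i = complex_of_real (d i) *s u i"
    using hermitian_orthonormal_eigvecs[OF herm, of UNIV] by auto
  define U where "U = (\<chi> i j. u j $ i)"
  have UU: "cadjoint U ** U = mat 1"
    using orth by (simp add: vec_eq_iff U_def matrix_matrix_mult_def mat_def cinner_def)
  hence UU': "U ** cadjoint U = mat 1" using matrix_left_right_inverse by blast
  have "(A ** U) $ i $ j = (U ** diag_mat d) $ i $ j" for i j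
  proof -
    have "(A ** U) $ i $ j = (A *v u j) $ i"
      by (simp add: U_def matrix_matrix_mult_def matrix_vector_mult_def)
    also have "\<dots> = (U ** diag_mat d) $ i $ j"
      by (simp add: eig U_def matrix_matrix_mult_def diag_mat_def if_distrib if_distribR cong: if_cong)
    finally show ?thesis .
  qed
  hence "A ** U = U ** diag_mat d" by (simp add: vec_eq_iff)
  hence "A = udiag U d" unfolding udiag_def by (metis UU' matrix_mul_assoc matrix_mul_rid)
  thus ?thesis using UU UU' unfolding unitary_def by blast
qed

lemma unitary_invertible: "unitary U \<Longrightarrow> invertible U"
  unfolding unitary_def invertible_def by blast

lemma unitary_cadjoint: "unitary U \<Longrightarrow> unitary (cadjoint U)"
  unfolding unitary_def by simp

lemma diag_mat_mult: "diag_mat a ** diag_mat b = diag_mat (\<lambda>i. a i * b i)"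
proof -
  have "(\<Sum>k\<in>UNIV. (if i = k then complex_of_real (a i) else 0) * (if k = j then complex_of_real (b k) else 0))
      = (\<Sum>k\<in>UNIV. if k = i then (if i = j then complex_of_real (a i * b i) else 0) else 0)" for i j
    by (intro sum.cong refl) auto
  thus ?thesis unfolding vec_eq_iff diag_mat_def matrix_matrix_mult_def by simp
qed

lemma diag_mat_mult_axis: "diag_mat d *v axis k 1 = complex_of_real (d k) *s axis k 1"
proof -
  have "(\<Sum>j\<in>UNIV. (if i = j then complex_of_real (d i) else 0) * (if j = k then 1 else 0))
      = (\<Sum>j\<in>UNIV. if j = i then (if i = k then complex_of_real (d k) else 0) else 0)" for i
    by (intro sum.cong refl) auto
  thus ?thesis unfolding vec_eq_iff diag_mat_def matrix_vector_mult_def axis_def by simp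
qed

lemma udiag_mult:
  assumes "unitary U"
  shows "udiag U a ** udiag U b = udiag U (\<lambda>i. a i * b i)"
proof -
  have "udiag U a ** udiag U b = U ** diag_mat a ** (cadjoint U ** U) ** diag_mat b ** cadjoint U"
    unfolding udiag_def by (simp add: matrix_mul_assoc)
  thus ?thesis
    using assms unfolding unitary_def udiag_def by (simp add: diag_mat_mult matrix_mul_assoc[symmetric])
qed

lemma udiag_one:
  fixes U :: "complex^'n^'n"
  assumes "unitary U"
  shows "udiag U (\<lambda>_. 1) = mat 1"
proof -
  have "diag_mat (\<lambda>_. 1) = (mat 1 :: complex^'n^'n)" by (simp add: vec_eq_iff diag_mat_def mat_def)
  with assms show ?thesis unfolding udiag_def unitary_def by simp
qed

lemma hermitian_udiag: "cadjoint (udiag U d) = udiag U d"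
proof -
  have "cadjoint (diag_mat d) = diag_mat d" by (simp add: vec_eq_iff diag_mat_def)
  thus ?thesis unfolding udiag_def by (simp add: cadjoint_mult matrix_mul_assoc)
qed

lemma udiag_diff: "udiag U a - udiag U b = udiag U (\<lambda>i. a i - b i)"
proof -
  have "diag_mat a - diag_mat b = diag_mat (\<lambda>i. a i - b i)"
    by (simp add: vec_eq_iff diag_mat_def)
  thus ?thesis unfolding udiag_def
    by (simp add: vec_eq_iff matrix_matrix_mult_def left_diff_distrib right_diff_distrib sum_subtractf
        flip: \<open>diag_mat a - diag_mat b = _\<close>)
qed

lemma udiag_scaleR: "c *\<^sub>R udiag U a = udiag U (\<lambda>i. c * a i)"
proof -
  have "c *\<^sub>R diag_mat a = diag_mat (\<lambda>i. c * a i)"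
    by (simp add: vec_eq_iff diag_mat_def scaleR_mat_nth del: vector_scaleR_component)
  thus ?thesis unfolding udiag_def
    by (metis matrix_scalar_ac scalar_matrix_assoc)
qed

lemma udiag_mult_column:
  assumes "unitary U"
  shows "udiag U d *v (U *v axis k 1) = complex_of_real (d k) *s (U *v axis k 1)"
proof -
  have "udiag U d *v (U *v axis k 1) = U *v (diag_mat d *v axis k 1)"
    using assms unfolding udiag_def unitary_def
    by (simp add: matrix_vector_mul_assoc matrix_mul_assoc[symmetric])
  thus ?thesis by (simp add: diag_mat_mult_axis vector_scalar_commute)
qed

lemma qform_diag_mat: "qform (diag_mat d) y = (\<Sum>i\<in>UNIV. complex_of_real (d i * (cmod (y$i))^2))"
  unfolding qform_def
  by (intro sum.cong refl)
     (simp add: matrix_vector_mult_def diag_mat_def if_distrib if_distribR cnj_mult_self[symmetric]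
       mult_ac cong: if_cong)

lemma qform_udiag: "qform (udiag U d) x = qform (diag_mat d) (cadjoint U *v x)"
  using qform_congruence[of "cadjoint U" "diag_mat d" x] unfolding udiag_def by simp

lemma pos_semidef_udiag: "(\<And>i. d i \<ge> 0) \<Longrightarrow> pos_semidef (udiag U d)"
  unfolding pos_semidef_def by (simp add: hermitian_udiag qform_udiag qform_diag_mat sum_nonneg)

lemma pos_def_udiag:
  fixes U :: "complex^'n^'n"
  assumes "unitary U" and "\<And>i. d i > 0"
  shows "pos_def (udiag U d)"
  unfolding pos_def_def
proof (intro conjI allI impI)
  fix x :: "complex^'n" assume "x \<noteq> 0"
  hence "cadjoint U *v x \<noteq> 0"
    using inj_matrix_vector_mult[OF unitary_invertible[OF unitary_cadjoint[OF \<open>unitary U\<close>]]]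
    by (metis injD matrix_vector_mult_0_right)
  then obtain k where k: "(cadjoint U *v x) $ k \<noteq> 0" by (auto simp: vec_eq_iff)
  have "0 < (\<Sum>i\<in>UNIV. d i * (cmod ((cadjoint U *v x) $ i))^2)"
    using assms(2) k by (intro sum_pos2[where i=k]) (auto simp: less_imp_le)
  thus "Re (qform (udiag U d) x) > 0" by (simp add: qform_udiag qform_diag_mat)
qed (simp_all add: hermitian_udiag qform_udiag qform_diag_mat)

lemma qform_udiag_column: "unitary U \<Longrightarrow> qform (udiag U d) (U *v axis k 1) = complex_of_real (d k)"
  unfolding qform_udiag qform_diag_mat unitary_def
  by (simp add: matrix_vector_mul_assoc axis_def if_distrib if_distribR cong: if_cong)

lemma pos_semidef_udiag_nonneg: "unitary U \<Longrightarrow> pos_semidef (udiag U d) \<Longrightarrow> d k \<ge> 0"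
  using qform_udiag_column[of U d k] unfolding pos_semidef_def by (metis Re_complex_of_real)

lemma pos_def_udiag_pos: "unitary U \<Longrightarrow> pos_def (udiag U d) \<Longrightarrow> d k > 0"
proof -
  assume "unitary U" and pd: "pos_def (udiag U d)"
  have "U *v axis k 1 \<noteq> 0"
    using inj_matrix_vector_mult[OF unitary_invertible[OF \<open>unitary U\<close>]]
    by (metis axis_eq_0_iff injD matrix_vector_mult_0_right one_neq_zero)
  thus ?thesis using pd qform_udiag_column[OF \<open>unitary U\<close>, of d k] unfolding pos_def_def by force
qed

lemma pos_def_imp_udiag: "pos_def A \<Longrightarrow> \<exists>U d. unitary U \<and> A = udiag U d \<and> (\<forall>i. d i > 0)"
  using hermitian_spectral pos_def_udiag_pos unfolding pos_def_def by metis

section \<open>Square roots and inverses\<close>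

lemma pos_semidef_sq_eq_eigvec_0:
  assumes B: "pos_semidef B" and C: "pos_semidef C" and sq: "B ** B = C ** C"
    and eig: "(B - C) *v v = complex_of_real m *s v" and "m \<noteq> 0"
  shows "v = 0"
proof -
  have hB: "cadjoint B = B" and hC: "cadjoint C = C" using B C by (auto simp: pos_semidef_def)
  have hD: "cadjoint (B - C) = B - C" by (simp add: cadjoint_diff hB hC)
  \<comment> \<open>\<open>B (B - C) + (B - C) C = B\<^sup>2 - C\<^sup>2 = 0\<close>, tested against the eigenvector \<open>v\<close> of \<open>B - C\<close>.\<close>
  have "B *v ((B - C) *v v) + (B - C) *v (C *v v) = B *v (B *v v) - C *v (C *v v)"
    by (simp add: matrix_vector_mult_diff_rdistrib matrix_vector_mult_diff_distrib)
  also have "\<dots> = (B ** B) *v v - (C ** C) *v v" by (simp add: matrix_vector_mul_assoc)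
  finally have "B *v ((B - C) *v v) + (B - C) *v (C *v v) = (B ** B) *v v - (C ** C) *v v" .
  hence "cinner v (B *v ((B - C) *v v)) + cinner v ((B - C) *v (C *v v)) = 0"
    using sq by (simp flip: cinner_add_right)
  moreover have "cinner v (B *v ((B - C) *v v)) = complex_of_real m * qform B v"
    by (simp add: eig vector_scalar_commute cinner_scale_right qform_cinner)
  moreover have "cinner v ((B - C) *v (C *v v)) = complex_of_real m * qform C v"
    by (simp add: cinner_hermitian[OF hD] eig cinner_scale_left qform_cinner)
  ultimately have "complex_of_real m * (qform B v + qform C v) = 0"
    by (simp add: distrib_left)
  hence "Re (qform B v + qform C v) = 0" using \<open>m \<noteq> 0\<close> by simp
  hence "Re (qform B v) + Re (qform C v) = 0" by simp
  moreover have "Re (qform B v) \<ge> 0" "Re (qform C v) \<ge> 0"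
    using B C by (auto simp: pos_semidef_def)
  ultimately have "B *v v = 0" "C *v v = 0"
    using pos_semidef_qform_eq_0_imp_kernel B C by (metis add_nonneg_eq_0_iff)+
  hence "complex_of_real m *s v = 0" by (simp flip: eig add: matrix_vector_mult_diff_rdistrib)
  thus ?thesis using \<open>m \<noteq> 0\<close> by (simp add: vec_eq_iff)
qed

lemma pos_semidef_sq_eq_imp_eq:
  assumes B: "pos_semidef B" and C: "pos_semidef C" and sq: "B ** B = C ** C"
  shows "B = C"
proof -
  have "cadjoint (B - C) = B - C" using B C by (simp add: cadjoint_diff pos_semidef_def)
  then obtain V m where V: "unitary V" and BC: "B - C = udiag V m"
    using hermitian_spectral by blast
  have "m k = 0" for k
  proof (rule ccontr)
    assume "m k \<noteq> 0"
    have "V *v axis k 1 = 0"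
      using pos_semidef_sq_eq_eigvec_0[OF B C sq _ \<open>m k \<noteq> 0\<close>] udiag_mult_column[OF V] BC by metis
    thus False
      using inj_matrix_vector_mult[OF unitary_invertible[OF V]]
      by (metis axis_eq_0_iff injD matrix_vector_mult_0_right one_neq_zero)
  qed
  hence "m = (\<lambda>i. 0 * m i)" by (simp add: fun_eq_iff)
  hence "B - C = 0 *\<^sub>R udiag V m" unfolding BC udiag_scaleR by metis
  thus ?thesis by simp
qed

lemma msqrt_eqI: "pos_semidef B \<Longrightarrow> B ** B = A \<Longrightarrow> msqrt A = B"
  unfolding msqrt_def using pos_semidef_sq_eq_imp_eq by (intro the_equality) auto

lemma msqrt_udiag:
  "unitary U \<Longrightarrow> (\<And>i. d i \<ge> 0) \<Longrightarrow> msqrt (udiag U d) = udiag U (\<lambda>i. sqrt (d i))"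
  by (rule msqrt_eqI) (auto intro!: pos_semidef_udiag simp: udiag_mult)

lemma msqrt_pos_semidef:
  assumes "pos_semidef A"
  shows "pos_semidef (msqrt A)" and "msqrt A ** msqrt A = A"
proof -
  obtain U d where U: "unitary U" and A: "A = udiag U d"
    using hermitian_spectral assms unfolding pos_semidef_def by blast
  have "d i \<ge> 0" for i using pos_semidef_udiag_nonneg U assms A by blast
  thus "pos_semidef (msqrt A)" "msqrt A ** msqrt A = A"
    unfolding A by (simp_all add: msqrt_udiag U pos_semidef_udiag udiag_mult)
qed

lemma matrix_inv_eqI:
  fixes A B :: "'a::field^'n^'n"
  assumes "A ** B = mat 1"
  shows "matrix_inv A = B"
proof -
  have BA: "B ** A = mat 1" using assms matrix_left_right_inverse by blast
  have "A ** matrix_inv A = mat 1 \<and> matrix_inv A ** A = mat 1"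
    unfolding matrix_inv_def by (rule someI[of _ B]) (use assms BA in auto)
  hence "matrix_inv A = matrix_inv A ** (A ** B)" using assms by simp
  also have "\<dots> = B" by (simp add: matrix_mul_assoc \<open>_ \<and> matrix_inv A ** A = mat 1\<close>)
  finally show ?thesis .
qed

lemma matrix_inv_right:
  fixes A :: "'a::field^'n^'n"
  shows "invertible A \<Longrightarrow> A ** matrix_inv A = mat 1"
  using matrix_inv_eqI unfolding invertible_def by metis

lemma matrix_inv_left:
  fixes A :: "'a::field^'n^'n"
  shows "invertible A \<Longrightarrow> matrix_inv A ** A = mat 1"
  using matrix_inv_right matrix_left_right_inverse by blast

lemma matrix_inv_udiag:
  "unitary U \<Longrightarrow> (\<And>i. d i \<noteq> 0) \<Longrightarrow> matrix_inv (udiag U d) = udiag U (\<lambda>i. 1 / d i)"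
  by (rule matrix_inv_eqI) (simp add: udiag_mult udiag_one)

lemma invertible_udiag: "unitary U \<Longrightarrow> (\<And>i. d i \<noteq> 0) \<Longrightarrow> invertible (udiag U d)"
  unfolding invertible_right_inverse
  by (rule exI[of _ "udiag U (\<lambda>i. 1 / d i)"]) (simp add: udiag_mult udiag_one)

lemma pos_def_invertible: "pos_def A \<Longrightarrow> invertible A"
  using pos_def_imp_udiag invertible_udiag by (metis less_irrefl)

lemma pos_def_inv_msqrt:
  assumes "pos_def A"
  shows "cadjoint (msqrt A) = msqrt A"
    and "cadjoint (matrix_inv (msqrt A)) = matrix_inv (msqrt A)"
    and "msqrt A ** matrix_inv (msqrt A) = mat 1"
    and "matrix_inv (msqrt A) ** msqrt A = mat 1"
    and "matrix_inv (msqrt A) ** matrix_inv (msqrt A) = matrix_inv A"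
proof -
  obtain U a where U: "unitary U" and A: "A = udiag U a" and a: "\<And>i. a i > 0"
    using pos_def_imp_udiag assms by blast
  have sqrt_a: "sqrt (a i) \<noteq> 0" "a i \<noteq> 0" "\<bar>a i\<bar> = a i" for i using a[of i] by auto
  have "msqrt A = udiag U (\<lambda>i. sqrt (a i))" unfolding A using a by (simp add: msqrt_udiag U less_imp_le)
  moreover have "matrix_inv (udiag U (\<lambda>i. sqrt (a i))) = udiag U (\<lambda>i. 1 / sqrt (a i))"
    using sqrt_a by (simp add: matrix_inv_udiag U)
  ultimately show "cadjoint (msqrt A) = msqrt A"
    and "cadjoint (matrix_inv (msqrt A)) = matrix_inv (msqrt A)"
    and "msqrt A ** matrix_inv (msqrt A) = mat 1"
    and "matrix_inv (msqrt A) ** msqrt A = mat 1"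
    and "matrix_inv (msqrt A) ** matrix_inv (msqrt A) = matrix_inv A"
    using a sqrt_a by (simp_all add: hermitian_udiag udiag_mult udiag_one U A matrix_inv_udiag
        real_sqrt_mult[symmetric])
qed

lemma pos_def_matrix_inv: "pos_def A \<Longrightarrow> pos_def (matrix_inv A)"
  by (metis pos_def_imp_udiag matrix_inv_udiag pos_def_udiag less_irrefl zero_less_divide_1_iff)

lemma pos_semidef_congruence: "pos_semidef M \<Longrightarrow> pos_semidef (cadjoint C ** M ** C)"
  unfolding pos_semidef_def by (simp add: qform_congruence cadjoint_mult matrix_mul_assoc)

lemma pos_def_congruence:
  fixes M C :: "complex^'n^'n"
  assumes M: "pos_def M" and "invertible C"
  shows "pos_def (cadjoint C ** M ** C)"
  unfolding pos_def_def
proof (intro conjI allI impI)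
  show "cadjoint (cadjoint C ** M ** C) = cadjoint C ** M ** C"
    using M by (simp add: pos_def_def cadjoint_mult matrix_mul_assoc)
  fix x :: "complex^'n" assume "x \<noteq> 0"
  hence "C *v x \<noteq> 0"
    using inj_matrix_vector_mult[OF \<open>invertible C\<close>] by (metis injD matrix_vector_mult_0_right)
  thus "Im (qform (cadjoint C ** M ** C) x) = 0" "Re (qform (cadjoint C ** M ** C) x) > 0"
    using M unfolding qform_congruence pos_def_def by auto
qed

section \<open>The matrix geometric mean\<close>

lemma mgeo_riccati:
  assumes A: "pos_def A" and B: "pos_semidef B"
  shows "pos_semidef (mgeo A B)" and "mgeo A B ** matrix_inv A ** mgeo A B = B"
proof -
  define p where "p = msqrt A"
  define q where "q = matrix_inv p"
  note inv = pos_def_inv_msqrt[OF A, folded p_def, folded q_def]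
  define m where "m = msqrt (q ** B ** q)"
  have "pos_semidef (q ** B ** q)" using pos_semidef_congruence[OF B, of q] inv by simp
  hence m: "pos_semidef m" "m ** m = q ** B ** q" unfolding m_def by (rule msqrt_pos_semidef)+
  have G: "mgeo A B = p ** m ** p" unfolding mgeo_def m_def p_def q_def ..
  show "pos_semidef (mgeo A B)" unfolding G using pos_semidef_congruence[OF m(1), of p] inv by simp
  have "mgeo A B ** matrix_inv A ** mgeo A B = p ** m ** (p ** q) ** (q ** p) ** m ** p"
    unfolding G by (simp add: inv(5)[symmetric] matrix_mul_assoc)
  also have "\<dots> = p ** (m ** m) ** p" by (simp add: inv matrix_mul_assoc)
  also have "\<dots> = (p ** q) ** B ** (q ** p)" by (simp add: m(2) matrix_mul_assoc)
  finally show "mgeo A B ** matrix_inv A ** mgeo A B = B" by (simp add: inv)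
qed

lemma mgeo_unique:
  assumes A: "pos_def A" and G: "pos_semidef G" and riccati: "G ** matrix_inv A ** G = B"
  shows "mgeo A B = G"
proof -
  define p where "p = msqrt A"
  define q where "q = matrix_inv p"
  note inv = pos_def_inv_msqrt[OF A, folded p_def, folded q_def]
  have "(q ** G ** q) ** (q ** G ** q) = q ** (G ** (q ** q) ** G) ** q"
    by (simp add: matrix_mul_assoc)
  also have "\<dots> = q ** B ** q" by (simp add: inv riccati)
  finally have "msqrt (q ** B ** q) = q ** G ** q"
    using pos_semidef_congruence[OF G, of q] inv by (intro msqrt_eqI) simp_all
  hence "mgeo A B = (p ** q) ** G ** (q ** p)"
    unfolding mgeo_def p_def[symmetric] q_def[symmetric] by (simp add: matrix_mul_assoc)
  thus ?thesis by (simp add: inv)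
qed

lemma mgeo_congruence:
  fixes A B C :: "complex^'n^'n"
  assumes A: "pos_def A" and B: "pos_semidef B" and C: "invertible C"
  shows "mgeo (cadjoint C ** A ** C) (cadjoint C ** B ** C) = cadjoint C ** mgeo A B ** C"
proof (rule mgeo_unique)
  define Ci where "Ci = matrix_inv C"
  have CCi: "C ** Ci = mat 1" and CiC: "Ci ** C = mat 1"
    using C unfolding Ci_def by (simp_all add: matrix_inv_right matrix_inv_left)
  have CCi': "cadjoint Ci ** cadjoint C = mat 1"
    using arg_cong[OF CCi, of cadjoint] by (simp add: cadjoint_mult)
  have CiC': "cadjoint C ** cadjoint Ci = mat 1"
    using arg_cong[OF CiC, of cadjoint] by (simp add: cadjoint_mult)
  have "(cadjoint C ** A ** C) ** (Ci ** matrix_inv A ** cadjoint Ci)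
      = cadjoint C ** A ** (C ** Ci) ** matrix_inv A ** cadjoint Ci"
    by (simp add: matrix_mul_assoc)
  also have "\<dots> = cadjoint C ** (A ** matrix_inv A) ** cadjoint Ci"
    by (simp add: CCi matrix_mul_assoc)
  also have "\<dots> = mat 1"
    by (simp add: matrix_inv_right[OF pos_def_invertible[OF A]] CiC')
  finally have inv: "matrix_inv (cadjoint C ** A ** C) = Ci ** matrix_inv A ** cadjoint Ci"
    by (rule matrix_inv_eqI)
  show "pos_def (cadjoint C ** A ** C)" using pos_def_congruence[OF A C] .
  show "pos_semidef (cadjoint C ** mgeo A B ** C)"
    using pos_semidef_congruence[OF mgeo_riccati(1)[OF A B]] .
  have "cadjoint C ** mgeo A B ** C ** matrix_inv (cadjoint C ** A ** C) ** (cadjoint C ** mgeo A B ** C)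
      = cadjoint C ** mgeo A B ** (C ** Ci) ** matrix_inv A ** (cadjoint Ci ** cadjoint C) ** mgeo A B ** C"
    unfolding inv by (simp add: matrix_mul_assoc)
  also have "\<dots> = cadjoint C ** (mgeo A B ** matrix_inv A ** mgeo A B) ** C"
    by (simp add: CCi CCi' matrix_mul_assoc)
  finally show "cadjoint C ** mgeo A B ** C ** matrix_inv (cadjoint C ** A ** C) ** (cadjoint C ** mgeo A B ** C)
      = cadjoint C ** B ** C"
    by (simp add: mgeo_riccati(2)[OF A B])
qed

lemma mgeo_udiag:
  assumes V: "unitary V" and x: "\<And>i. x i > 0" and y: "\<And>i. y i \<ge> 0"
  shows "mgeo (udiag V x) (udiag V y) = udiag V (\<lambda>i. sqrt (x i * y i))"
proof (rule mgeo_unique)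
  show "pos_def (udiag V x)" by (rule pos_def_udiag[OF V x])
  show "pos_semidef (udiag V (\<lambda>i. sqrt (x i * y i)))" using x y by (auto intro!: pos_semidef_udiag simp: less_imp_le)
  have "sqrt (x i * y i) * (1 / x i) * sqrt (x i * y i) = y i" for i
    using x[of i] y[of i] by (simp add: real_sqrt_mult[symmetric] abs_mult)
  thus "udiag V (\<lambda>i. sqrt (x i * y i)) ** matrix_inv (udiag V x) ** udiag V (\<lambda>i. sqrt (x i * y i))
      = udiag V y"
    using x by (simp add: matrix_inv_udiag V udiag_mult less_imp_neq[symmetric])
qed

section \<open>Fidelities\<close>

lemma pos_def_convex_comb:
  assumes P: "pos_def P" and Q: "pos_def Q" and "0 \<le> t" "t \<le> 1"
  shows "pos_def ((1 - t) *\<^sub>R P + t *\<^sub>R Q)"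
  unfolding pos_def_def
proof (intro conjI allI impI)
  show "cadjoint ((1 - t) *\<^sub>R P + t *\<^sub>R Q) = (1 - t) *\<^sub>R P + t *\<^sub>R Q"
    using P Q by (simp add: cadjoint_add cadjoint_scaleR pos_def_def)
  fix x :: "complex^'a" assume "x \<noteq> 0"
  hence p: "Im (qform P x) = 0" "Re (qform P x) > 0" and q: "Im (qform Q x) = 0" "Re (qform Q x) > 0"
    using P Q by (auto simp: pos_def_def)
  have form: "qform ((1 - t) *\<^sub>R P + t *\<^sub>R Q) x
      = complex_of_real (1 - t) * qform P x + complex_of_real t * qform Q x"
    by (simp add: qform_add qform_scaleR_left)
  show "Im (qform ((1 - t) *\<^sub>R P + t *\<^sub>R Q) x) = 0" using form p q by simp
  have "(1 - t) * Re (qform P x) + t * Re (qform Q x) > 0"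
  proof (cases "t = 0")
    case False
    thus ?thesis using p q \<open>0 \<le> t\<close> \<open>t \<le> 1\<close> by (simp add: add_nonneg_pos)
  qed (use p in simp)
  thus "Re (qform ((1 - t) *\<^sub>R P + t *\<^sub>R Q) x) > 0" using form p q by simp
qed

text \<open>Since \<open>t Y = 1 - (1 - t) X\<close>, an eigenbasis of \<open>X\<close> diagonalises \<open>Y\<close> as well (for \<open>t = 0\<close>, \<open>X = 1\<close>).\<close>

lemma convex_comb_eq_1_simultaneous_udiag:
  assumes X: "pos_def X" and Y: "pos_def Y" and "0 \<le> t" "t \<le> 1"
    and sum: "(1 - t) *\<^sub>R X + t *\<^sub>R Y = mat 1"
  shows "\<exists>V x y. unitary V \<and> X = udiag V x \<and> Y = udiag V y \<and> (\<forall>i. x i > 0) \<and> (\<forall>i. y i > 0)"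
proof (cases "t = 0")
  case True
  obtain V y where V: "unitary V" "Y = udiag V y" "\<forall>i. y i > 0" using pos_def_imp_udiag[OF Y] by blast
  have "X = udiag V (\<lambda>_. 1)" using sum True udiag_one[OF V(1)] by simp
  thus ?thesis using V by (intro exI[of _ V] exI[of _ "\<lambda>_. 1"] exI[of _ y]) auto
next
  case False
  obtain V x where V: "unitary V" "X = udiag V x" "\<forall>i. x i > 0" using pos_def_imp_udiag[OF X] by blast
  have "t *\<^sub>R Y = mat 1 - (1 - t) *\<^sub>R X" using sum by (simp add: algebra_simps)
  also have "\<dots> = udiag V (\<lambda>i. 1 - (1 - t) * x i)"
    using V(2) by (simp add: udiag_scaleR udiag_diff udiag_one[OF V(1), symmetric])
  finally have "(1 / t) *\<^sub>R (t *\<^sub>R Y) = (1 / t) *\<^sub>R udiag V (\<lambda>i. 1 - (1 - t) * x i)" by simp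
  hence Yd: "Y = udiag V (\<lambda>i. (1 - (1 - t) * x i) / t)" using False by (simp add: udiag_scaleR)
  hence "\<forall>i. (1 - (1 - t) * x i) / t > 0" using pos_def_udiag_pos[OF V(1)] Y by blast
  thus ?thesis using V Yd by blast
qed

lemma gen_fidelity_eq_matsumoto_fidelity_if_commuting:
  fixes P Q R :: "complex^'n^'n"
  assumes R: "pos_def R" and V: "unitary V"
    and X: "msqrt R ** P ** msqrt R = udiag V x" and x: "\<And>i. x i > 0"
    and Y: "msqrt R ** Q ** msqrt R = udiag V y" and y: "\<And>i. y i \<ge> 0"
  shows "gen_fidelity R P Q = matsumoto_fidelity P Q"
proof -
  define r where "r = msqrt R"
  define ri where "ri = matrix_inv r"
  note inv = pos_def_inv_msqrt[OF R, folded r_def, folded ri_def]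
  have "invertible ri" using inv(3,4) unfolding invertible_def by blast
  define H where "H = udiag V (\<lambda>i. sqrt (x i * y i))"
  have "gen_fidelity R P Q = trace (udiag V (\<lambda>i. sqrt (x i)) ** (ri ** ri) ** udiag V (\<lambda>i. sqrt (y i)))"
    using X Y x y
    by (simp add: gen_fidelity_def msqrt_udiag V less_imp_le flip: r_def inv(5))
  also have "\<dots> = trace (udiag V (\<lambda>i. sqrt (y i)) ** udiag V (\<lambda>i. sqrt (x i)) ** (ri ** ri))"
    by (simp add: trace_mul_sym[of _ "udiag V (\<lambda>i. sqrt (y i))"] matrix_mul_assoc)
  also have "\<dots> = trace ((H ** ri) ** ri)"
    by (simp add: H_def udiag_mult V real_sqrt_mult mult.commute matrix_mul_assoc)
  also have "\<dots> = trace (ri ** H ** ri)"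
    by (simp add: trace_mul_sym[of "H ** ri"] matrix_mul_assoc)
  also have "ri ** H ** ri = mgeo P Q"
  proof -
    have "cadjoint ri ** (r ** M ** r) ** ri = (ri ** r) ** M ** (r ** ri)" for M
      by (simp add: inv(2) matrix_mul_assoc)
    hence "mgeo P Q = mgeo (cadjoint ri ** udiag V x ** ri) (cadjoint ri ** udiag V y ** ri)"
      by (simp add: inv(3,4) flip: X[folded r_def] Y[folded r_def])
    also have "\<dots> = cadjoint ri ** mgeo (udiag V x) (udiag V y) ** ri"
      using \<open>invertible ri\<close> by (intro mgeo_congruence pos_def_udiag pos_semidef_udiag V x y)
    finally show ?thesis by (simp add: mgeo_udiag V x y H_def inv(2))
  qed
  finally show ?thesis unfolding matsumoto_fidelity_def .
qed

theorem mainTheorem12: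
  fixes P Q R :: "complex^'n^'n" and t :: real
  assumes "pos_def P" and "pos_def Q"
    and "0 \<le> t" and "t \<le> 1"
    and "R = matrix_inv ((1 - t) *\<^sub>R P + t *\<^sub>R Q)"
  shows "gen_fidelity R P Q = matsumoto_fidelity P Q"
proof -
  define S where "S = (1 - t) *\<^sub>R P + t *\<^sub>R Q"
  have S: "pos_def S" unfolding S_def using pos_def_convex_comb assms(1-4) .
  have R: "pos_def R" using pos_def_matrix_inv[OF S] assms(5) unfolding S_def by simp
  define r where "r = msqrt R"
  define ri where "ri = matrix_inv r"
  note inv = pos_def_inv_msqrt[OF R, folded r_def, folded ri_def]
  have "matrix_inv R = S"
    using matrix_inv_left[OF pos_def_invertible[OF S]] assms(5) unfolding S_def by (intro matrix_inv_eqI) simp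
  hence "r ** S ** r = r ** (ri ** ri) ** r" by (simp add: inv(5))
  also have "\<dots> = (r ** ri) ** (ri ** r)" by (simp add: matrix_mul_assoc)
  finally have "r ** S ** r = mat 1" by (simp add: inv(3,4))
  hence "(1 - t) *\<^sub>R (r ** P ** r) + t *\<^sub>R (r ** Q ** r) = mat 1"
    unfolding S_def
    by (simp add: matrix_add_ldistrib matrix_add_rdistrib scalar_matrix_assoc matrix_scalar_ac)
  moreover have "invertible r" using inv(3,4) unfolding invertible_def by blast
  hence "pos_def (r ** P ** r)" "pos_def (r ** Q ** r)"
    using pos_def_congruence[OF assms(1)] pos_def_congruence[OF assms(2)] inv(1) by metis+
  ultimately obtain V x y where V: "unitary V" and X: "r ** P ** r = udiag V x"
    and Y: "r ** Q ** r = udiag V y" and x: "\<forall>i. x i > 0" and y: "\<forall>i. y i > 0"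
    using convex_comb_eq_1_simultaneous_udiag[OF _ _ assms(3,4)] by blast
  show ?thesis
    using gen_fidelity_eq_matsumoto_fidelity_if_commuting[OF R V X[unfolded r_def] _
        Y[unfolded r_def]] x y by (simp add: less_imp_le)
qed

end
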